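(* Let $W:\mathcal X\to\mathcal Y$ and $Q:\mathcal X\to\mathcal Z$ be DMCs with $W\preccurlyeq Q$, and fix an input distribution. Then $$I(Q)-I(W)\ \ge\ \sum_{z\in\mathcal Z}\frac12\sum_{y\in\mathcal A_z}\pi_y\|\mathbf z-\mathbf y\|_2^2 .$$
   Context: $\mathcal X,\mathcal Y,\mathcal Z$ are finite, pairwise disjoint. $W\preccurlyeq Q$ means there is a channel $\Phi:\mathcal Z\to\mathcal Y$ with $W(y|x)=\sum_zQ(z|x)\Phi(y|z)$. A fixed input distribution $\pi(x)>0$ induces output probabilities $\pi_y=\sum_x\pi(x)W(y|x)$ and $\pi_z=\sum_x\pi(x)Q(z|x)$ (assumed positive), and posterior vectors $\mathbf y=(y_x)_{x\in\mathcal X}$, $y_x=\pi(x)W(y|x)/\pi_y$, and $\mathbf z=(z_x)_{x\in\mathcal X}$, $z_x=\pi(x)Q(z|x)/\pi_z$. $I(\cdot)$ is input–output mutual information (natural log). For $z\in\mathcal Z$, $\mathcal A_z=\{y\in\mathcal Y: z=\arg\min_{z'\in\mathcal Z}\|\mathbf z'-\mathbf y\|_2^2\}$, where ties in the argmin are broken in a fixed arbitrary way, so that the sets $\mathcal A_z$ partition $\mathcal Y$; $\|\cdot\|_2$ is the Euclidean norm. *)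

theory Defs
  imports Main "HOL-Analysis.Analysis"
begin

text \<open>A DMC from input alphabet 'a to output alphabet 'b is a stochastic
  matrix W, with W x y = W(y|x).\<close>
definition channel :: "('a::finite \<Rightarrow> 'b::finite \<Rightarrow> real) \<Rightarrow> bool" where
  "channel W \<longleftrightarrow> (\<forall>x y. W x y \<ge> 0) \<and> (\<forall>x. (\<Sum>y\<in>UNIV. W x y) = 1)"

definition degraded :: "('x::finite \<Rightarrow> 'y::finite \<Rightarrow> real) \<Rightarrow> ('x \<Rightarrow> 'z::finite \<Rightarrow> real) \<Rightarrow> bool" where
  "degraded W Q \<longleftrightarrow> (\<exists>Phi :: 'z \<Rightarrow> 'y \<Rightarrow> real. channel Phi \<and>
      (\<forall>x y. W x y = (\<Sum>z\<in>UNIV. Q x z * Phi z y)))"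

definition out_prob :: "('x::finite \<Rightarrow> real) \<Rightarrow> ('x \<Rightarrow> 'y \<Rightarrow> real) \<Rightarrow> 'y \<Rightarrow> real" where
  "out_prob p W y = (\<Sum>x\<in>UNIV. p x * W x y)"

definition posterior :: "('x::finite \<Rightarrow> real) \<Rightarrow> ('x \<Rightarrow> 'y \<Rightarrow> real) \<Rightarrow> 'y \<Rightarrow> 'x \<Rightarrow> real" where
  "posterior p W y = (\<lambda>x. p x * W x y / out_prob p W y)"

definition mutual_info :: "('x::finite \<Rightarrow> real) \<Rightarrow> ('x \<Rightarrow> 'y::finite \<Rightarrow> real) \<Rightarrow> real" where
  "mutual_info p W = (\<Sum>x\<in>UNIV. \<Sum>y\<in>UNIV.
      (if p x * W x y = 0 then 0 else p x * W x y * ln (W x y / out_prob p W y)))"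

definition sqdist :: "('x::finite \<Rightarrow> real) \<Rightarrow> ('x \<Rightarrow> real) \<Rightarrow> real" where
  "sqdist u v = (\<Sum>x\<in>UNIV. (u x - v x)^2)"

end

theory Submission
  imports Defs
begin

text \<open>Let c(y,z) = pi_z Phi(y|z) be the joint law of the output z of Q and the output y
  of the degrading channel Phi. Each posterior vector y is the c-mixture of the posterior vectors
  z, and the chain rule for relative entropy turns this into
  I(Q) - I(W) = sum_y sum_z c(y,z) D(z || y). The elementary bound
  a ln (a/b) >= (a - b) + (a - b)^2/2 on (0,1] gives D(z || y) >= |z - y|^2/2, which dominates
  half the squared distance of y to its nearest posterior; and sum_z c(y,z) = pi_y.\<close>

definition rel_entropy :: "('x::finite \<Rightarrow> real) \<Rightarrow> ('x \<Rightarrow> real) \<Rightarrow> real" where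
  "rel_entropy u v = (\<Sum>x\<in>UNIV. u x * ln (u x / v x))"

lemma mult_ln_div_ge_quadratic:
  fixes a b :: real
  assumes a: "0 < a" "a \<le> 1" and b: "0 < b" "b \<le> 1"
  shows "a * ln (a / b) \<ge> (a - b) + (a - b)\<^sup>2 / 2"
proof -
  define h where "h t = a * ln a - a * ln t - a + t - (a - t)\<^sup>2 / 2" for t
  have h_deriv: "DERIV h t :> (t - a) * (1 / t - 1)" if "t > 0" for t
    unfolding h_def using that a
    by (auto intro!: derivative_eq_intros simp: field_simps power2_eq_square)
  have "h a \<le> h b"
  proof (cases "a \<le> b")
    case True
    show ?thesis
    proof (rule DERIV_nonneg_imp_nondecreasing[OF True])
      fix t assume t: "a \<le> t" "t \<le> b"
      have "(t - a) * (1 / t - 1) \<ge> 0"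
        using t a b by (intro mult_nonneg_nonneg) (auto simp: field_simps)
      then show "\<exists>d. DERIV h t :> d \<and> d \<ge> 0" using h_deriv[of t] t a by auto
    qed
  next
    case False
    show ?thesis
    proof (rule DERIV_nonpos_imp_nonincreasing[of b a h])
      show "b \<le> a" using False by simp
      fix t assume t: "b \<le> t" "t \<le> a"
      have "(t - a) * (1 / t - 1) \<le> 0"
        using t a b by (intro mult_nonpos_nonneg) (auto simp: field_simps)
      then show "\<exists>d. DERIV h t :> d \<and> d \<le> 0" using h_deriv[of t] t b by auto
    qed
  qed
  moreover have "a * ln (a / b) = a * ln a - a * ln b"
    using a b by (simp add: ln_div right_diff_distrib)
  ultimately show ?thesis unfolding h_def by simp
qed

lemma rel_entropy_ge_half_sqdist:
  fixes u v :: "'x::finite \<Rightarrow> real"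
  assumes u_nonneg: "\<forall>x. u x \<ge> 0" and v_nonneg: "\<forall>x. v x \<ge> 0"
    and u_sum: "(\<Sum>x\<in>UNIV. u x) = 1" and v_sum: "(\<Sum>x\<in>UNIV. v x) = 1"
    and support: "\<forall>x. u x > 0 \<longrightarrow> v x > 0"
  shows "rel_entropy u v \<ge> sqdist u v / 2"
proof -
  have le_one: "f x \<le> 1" if "\<forall>x. f x \<ge> 0" "(\<Sum>x\<in>UNIV. f x) = 1" for f :: "'x \<Rightarrow> real" and x
    using member_le_sum[of x UNIV f] that by simp
  have termwise: "u x * ln (u x / v x) \<ge> (u x - v x) + (u x - v x)\<^sup>2 / 2" for x
  proof (cases "u x = 0")
    case True
    have "(v x)\<^sup>2 \<le> v x"
      using v_nonneg le_one[OF v_nonneg v_sum] by (simp add: power2_eq_square mult_left_le)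
    then show ?thesis using True v_nonneg[rule_format, of x] by simp
  next
    case False
    then show ?thesis
      using mult_ln_div_ge_quadratic[of "u x" "v x"] u_nonneg v_nonneg support
        le_one[OF u_nonneg u_sum] le_one[OF v_nonneg v_sum] by (simp add: less_le)
  qed
  have "sqdist u v / 2 = (\<Sum>x\<in>UNIV. (u x - v x) + (u x - v x)\<^sup>2 / 2)"
    using u_sum v_sum by (simp add: sum.distrib sum_subtractf sqdist_def sum_divide_distrib)
  also have "\<dots> \<le> rel_entropy u v"
    unfolding rel_entropy_def by (intro sum_mono termwise)
  finally show ?thesis .
qed

lemma rel_entropy_mixture_gap:
  fixes a :: "'z::finite \<Rightarrow> 'x::finite \<Rightarrow> real" and b :: "'y::finite \<Rightarrow> 'x \<Rightarrow> real"
    and c :: "'y \<Rightarrow> 'z \<Rightarrow> real" and \<alpha> :: "'z \<Rightarrow> real" and \<beta> :: "'y \<Rightarrow> real" and r :: "'x \<Rightarrow> real"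
  assumes r_pos: "\<forall>x. r x > 0" and a_nonneg: "\<forall>z x. a z x \<ge> 0"
    and marg_z: "\<forall>z. (\<Sum>y\<in>UNIV. c y z) = \<alpha> z"
    and mixture: "\<forall>y x. (\<Sum>z\<in>UNIV. c y z * a z x) = \<beta> y * b y x"
    and support: "\<forall>y z x. c y z \<noteq> 0 \<longrightarrow> a z x \<noteq> 0 \<longrightarrow> b y x > 0"
  shows "(\<Sum>z\<in>UNIV. \<alpha> z * rel_entropy (a z) r) - (\<Sum>y\<in>UNIV. \<beta> y * rel_entropy (b y) r)
       = (\<Sum>y\<in>UNIV. \<Sum>z\<in>UNIV. c y z * rel_entropy (a z) (b y))"
proof -
  have "(\<Sum>z\<in>UNIV. \<alpha> z * rel_entropy (a z) r) = (\<Sum>z\<in>UNIV. \<Sum>y\<in>UNIV. c y z * rel_entropy (a z) r)"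
    by (simp add: marg_z[rule_format, symmetric] sum_distrib_right)
  also have "\<dots> = (\<Sum>y\<in>UNIV. \<Sum>z\<in>UNIV. c y z * rel_entropy (a z) r)"
    by (rule sum.swap)
  finally have first: "(\<Sum>z\<in>UNIV. \<alpha> z * rel_entropy (a z) r) = \<dots>" .
  have "(\<Sum>y\<in>UNIV. \<beta> y * rel_entropy (b y) r)
      = (\<Sum>y\<in>UNIV. \<Sum>x\<in>UNIV. (\<beta> y * b y x) * ln (b y x / r x))"
    by (simp add: rel_entropy_def sum_distrib_left mult.assoc)
  also have "\<dots> = (\<Sum>y\<in>UNIV. \<Sum>x\<in>UNIV. \<Sum>z\<in>UNIV. c y z * a z x * ln (b y x / r x))"
    by (simp add: mixture[rule_format, symmetric] sum_distrib_right)
  also have "\<dots> = (\<Sum>y\<in>UNIV. \<Sum>z\<in>UNIV. \<Sum>x\<in>UNIV. c y z * a z x * ln (b y x / r x))"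
    by (intro sum.cong refl sum.swap)
  finally have second: "(\<Sum>y\<in>UNIV. \<beta> y * rel_entropy (b y) r) = \<dots>" .
  have pointwise: "c y z * (a z x * ln (a z x / r x)) - c y z * a z x * ln (b y x / r x)
      = c y z * (a z x * ln (a z x / b y x))" for y z x
  proof (cases "c y z = 0 \<or> a z x = 0")
    case False
    then have "a z x > 0" "b y x > 0" using a_nonneg support by (auto simp: less_le)
    then show ?thesis using r_pos[rule_format, of x] by (simp add: ln_div algebra_simps)
  qed auto
  show ?thesis
    unfolding first second sum_subtractf[symmetric]
    by (intro sum.cong refl) (simp add: rel_entropy_def sum_distrib_left sum_subtractf[symmetric] pointwise)
qed

lemma mutual_info_eq_rel_entropy:
  assumes "\<forall>x. p x \<noteq> 0" and "\<forall>y. out_prob p W y \<noteq> 0"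
  shows "mutual_info p W = (\<Sum>y\<in>UNIV. out_prob p W y * rel_entropy (posterior p W y) p)"
  unfolding mutual_info_def rel_entropy_def posterior_def
  using assms by (subst sum.swap) (auto intro!: sum.cong simp: sum_distrib_left)

lemma posterior_nonneg:
  assumes "channel W" and "\<forall>x. p x \<ge> 0" and "out_prob p W y \<ge> 0"
  shows "posterior p W y x \<ge> 0"
  using assms unfolding channel_def posterior_def by simp

lemma sum_posterior:
  assumes "out_prob p W y \<noteq> 0"
  shows "(\<Sum>x\<in>UNIV. posterior p W y x) = 1"
  using assms unfolding posterior_def out_prob_def by (simp add: sum_divide_distrib[symmetric])

lemma out_prob_comp:
  assumes "\<forall>x y. W x y = (\<Sum>z\<in>UNIV. Q x z * Phi z y)"
  shows "out_prob p W y = (\<Sum>z\<in>UNIV. out_prob p Q z * Phi z y)"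
proof -
  have "out_prob p W y = (\<Sum>x\<in>UNIV. \<Sum>z\<in>UNIV. p x * Q x z * Phi z y)"
    unfolding out_prob_def assms[rule_format] by (simp add: sum_distrib_left mult.assoc)
  also have "\<dots> = (\<Sum>z\<in>UNIV. out_prob p Q z * Phi z y)"
    unfolding out_prob_def sum_distrib_right by (rule sum.swap)
  finally show ?thesis .
qed

lemma comp_channel_pos:
  assumes "channel Q" and "channel Phi" and "\<forall>x y. W x y = (\<Sum>z\<in>UNIV. Q x z * Phi z y)"
    and "Q x z > 0" and "Phi z y > 0"
  shows "W x y > 0"
proof -
  have "Q x z * Phi z y \<le> W x y"
    using assms(1-3) member_le_sum[of z UNIV "\<lambda>z. Q x z * Phi z y"]
    unfolding channel_def by simp
  then show ?thesis using assms(4,5) by (smt (verit) mult_pos_pos)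
qed

lemma degraded_posterior_support:
  assumes Q: "channel Q" and Phi: "channel Phi" and comp: "\<forall>x y. W x y = (\<Sum>z\<in>UNIV. Q x z * Phi z y)"
    and "\<forall>x. p x > 0" and "out_prob p W y > 0"
    and "Phi z y \<noteq> 0" and "posterior p Q z x \<noteq> 0"
  shows "posterior p W y x > 0"
proof -
  have "Q x z > 0" "Phi z y > 0"
    using assms(6,7) Q Phi unfolding channel_def posterior_def by (auto simp: less_le)
  then have "W x y > 0" by (rule comp_channel_pos[OF Q Phi comp])
  then show ?thesis using assms(4,5) unfolding posterior_def by simp
qed

lemma degraded_posterior_rel_entropy_ge:
  assumes W: "channel W" and Q: "channel Q" and Phi: "channel Phi"
    and comp: "\<forall>x y. W x y = (\<Sum>z\<in>UNIV. Q x z * Phi z y)"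
    and p_pos: "\<forall>x. p x > 0" and py_pos: "out_prob p W y > 0" and pz_pos: "out_prob p Q z > 0"
    and "Phi z y \<noteq> 0"
  shows "rel_entropy (posterior p Q z) (posterior p W y) \<ge> sqdist (posterior p Q z) (posterior p W y) / 2"
proof (rule rel_entropy_ge_half_sqdist)
  show "\<forall>x. posterior p Q z x \<ge> 0" "\<forall>x. posterior p W y x \<ge> 0"
    using posterior_nonneg[OF Q] posterior_nonneg[OF W] p_pos py_pos pz_pos by (simp_all add: less_imp_le)
  show "(\<Sum>x\<in>UNIV. posterior p Q z x) = 1" "(\<Sum>x\<in>UNIV. posterior p W y x) = 1"
    using pz_pos py_pos by (simp_all add: sum_posterior)
  show "\<forall>x. posterior p Q z x > 0 \<longrightarrow> posterior p W y x > 0"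
    using degraded_posterior_support[OF Q Phi comp p_pos py_pos] assms(8) by simp
qed

lemma degraded_mutual_info_gap:
  assumes Q: "channel Q" and Phi: "channel Phi" and comp: "\<forall>x y. W x y = (\<Sum>z\<in>UNIV. Q x z * Phi z y)"
    and p_pos: "\<forall>x. p x > 0" and py_pos: "\<forall>y. out_prob p W y > 0" and pz_pos: "\<forall>z. out_prob p Q z > 0"
  shows "mutual_info p Q - mutual_info p W = (\<Sum>y\<in>UNIV. \<Sum>z\<in>UNIV.
      out_prob p Q z * Phi z y * rel_entropy (posterior p Q z) (posterior p W y))"
proof -
  have "\<forall>z. (\<Sum>y\<in>UNIV. out_prob p Q z * Phi z y) = out_prob p Q z"
    using Phi unfolding channel_def by (simp add: sum_distrib_left[symmetric])
  moreover have "(\<Sum>z\<in>UNIV. out_prob p Q z * Phi z y * posterior p Q z x)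
      = out_prob p W y * posterior p W y x" for y x
  proof -
    have "(\<Sum>z\<in>UNIV. out_prob p Q z * Phi z y * posterior p Q z x)
        = (\<Sum>z\<in>UNIV. p x * (Q x z * Phi z y))"
      using pz_pos by (intro sum.cong) (auto simp: posterior_def less_imp_neq[symmetric])
    also have "\<dots> = p x * W x y" by (simp add: comp sum_distrib_left)
    also have "\<dots> = out_prob p W y * posterior p W y x"
      using py_pos by (simp add: posterior_def less_imp_neq[symmetric])
    finally show ?thesis .
  qed
  moreover have "\<forall>z x. posterior p Q z x \<ge> 0"
    using posterior_nonneg[OF Q] p_pos pz_pos by (simp add: less_imp_le)
  moreover have "\<forall>y z x. out_prob p Q z * Phi z y \<noteq> 0 \<longrightarrow> posterior p Q z x \<noteq> 0
      \<longrightarrow> posterior p W y x > 0"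
    using degraded_posterior_support[OF Q Phi comp p_pos] py_pos by auto
  ultimately have chain: "(\<Sum>z\<in>UNIV. out_prob p Q z * rel_entropy (posterior p Q z) p)
      - (\<Sum>y\<in>UNIV. out_prob p W y * rel_entropy (posterior p W y) p)
      = (\<Sum>y\<in>UNIV. \<Sum>z\<in>UNIV. out_prob p Q z * Phi z y * rel_entropy (posterior p Q z) (posterior p W y))"
    using p_pos by (intro rel_entropy_mixture_gap) auto
  moreover have "mutual_info p Q = (\<Sum>z\<in>UNIV. out_prob p Q z * rel_entropy (posterior p Q z) p)"
    using p_pos pz_pos by (intro mutual_info_eq_rel_entropy) (auto simp: less_imp_neq[symmetric])
  moreover have "mutual_info p W = (\<Sum>y\<in>UNIV. out_prob p W y * rel_entropy (posterior p W y) p)"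
    using p_pos py_pos by (intro mutual_info_eq_rel_entropy) (auto simp: less_imp_neq[symmetric])
  ultimately show ?thesis by simp
qed

theorem lemma10:
  fixes W :: "'x::finite \<Rightarrow> 'y::finite \<Rightarrow> real"
    and Q :: "'x \<Rightarrow> 'z::finite \<Rightarrow> real"
    and p :: "'x \<Rightarrow> real"
    and g :: "'y \<Rightarrow> 'z"
  assumes W: "channel W" and Q: "channel Q"
    and deg: "degraded W Q"
    and p_pos: "\<forall>x. p x > 0" and p_sum: "(\<Sum>x\<in>UNIV. p x) = 1"
    and py_pos: "\<forall>y. out_prob p W y > 0"
    and pz_pos: "\<forall>z. out_prob p Q z > 0"
    and g_argmin: "\<forall>y z'. sqdist (posterior p Q (g y)) (posterior p W y)
                          \<le> sqdist (posterior p Q z') (posterior p W y)"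
  shows "mutual_info p Q - mutual_info p W \<ge>
    (\<Sum>z\<in>UNIV. 1/2 * (\<Sum>y\<in>{y. g y = z}.
        out_prob p W y * sqdist (posterior p Q z) (posterior p W y)))"
proof -
  obtain Phi :: "'z \<Rightarrow> 'y \<Rightarrow> real" where Phi: "channel Phi"
    and comp: "\<forall>x y. W x y = (\<Sum>z\<in>UNIV. Q x z * Phi z y)"
    using deg unfolding degraded_def by blast
  define K where "K y = sqdist (posterior p Q (g y)) (posterior p W y) / 2" for y
  have "out_prob p Q z * Phi z y * K y
      \<le> out_prob p Q z * Phi z y * rel_entropy (posterior p Q z) (posterior p W y)" for y z
  proof (cases "Phi z y = 0")
    case False
    have "K y \<le> sqdist (posterior p Q z) (posterior p W y) / 2"
      unfolding K_def using g_argmin by (simp add: divide_right_mono)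
    also have "\<dots> \<le> rel_entropy (posterior p Q z) (posterior p W y)"
      using degraded_posterior_rel_entropy_ge[OF W Q Phi comp p_pos] py_pos pz_pos False by simp
    finally show ?thesis
      using Phi pz_pos unfolding channel_def by (intro mult_left_mono mult_nonneg_nonneg) (auto intro: less_imp_le)
  qed simp
  then have gap: "(\<Sum>y\<in>UNIV. \<Sum>z\<in>UNIV. out_prob p Q z * Phi z y * K y) \<le> mutual_info p Q - mutual_info p W"
    unfolding degraded_mutual_info_gap[OF Q Phi comp p_pos py_pos pz_pos] by (intro sum_mono)
  have "(\<Sum>z\<in>UNIV. 1/2 * (\<Sum>y\<in>{y. g y = z}.
      out_prob p W y * sqdist (posterior p Q z) (posterior p W y)))
      = (\<Sum>z\<in>UNIV. \<Sum>y\<in>{y. g y = z}. out_prob p W y * K y)"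
    unfolding K_def sum_distrib_left by (intro sum.cong) auto
  also have "\<dots> = (\<Sum>y\<in>UNIV. out_prob p W y * K y)"
    using sum.group[of UNIV UNIV g "\<lambda>y. out_prob p W y * K y"] by simp
  also have "\<dots> = (\<Sum>y\<in>UNIV. \<Sum>z\<in>UNIV. out_prob p Q z * Phi z y * K y)"
    by (simp add: out_prob_comp[OF comp] sum_distrib_right)
  finally show ?thesis using gap by simp
qed

end
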